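(* Let $\alpha,\beta>0$. The Tversky dissimilarity $d^T_{\alpha,\beta}$ is a metric on the collection of all finite subsets of $\mathbb N$ if and only if $\alpha=\beta\ge 1$.
   Context: For finite sets $X,Y$ and parameters $\alpha,\beta>0$, the Tversky index is $S(X,Y)=\dfrac{|X\cap Y|}{|X\cap Y|+\alpha|X\setminus Y|+\beta|Y\setminus X|}$, and the Tversky dissimilarity is $d^T_{\alpha,\beta}(X,Y)=1-S(X,Y)$ if $X\cup Y\ne\emptyset$ and $d^T_{\alpha,\beta}(\emptyset,\emptyset)=0$. A metric satisfies nonnegativity, $d(x,y)=0$ iff $x=y$, symmetry, and the triangle inequality. *)

theory Defs
  imports Main Complex_Main
begin

definition tversky_index :: "real \<Rightarrow> real \<Rightarrow> 'a set \<Rightarrow> 'a set \<Rightarrow> real" where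
  "tversky_index \<alpha> \<beta> X Y =
     real (card (X \<inter> Y)) /
     (real (card (X \<inter> Y)) + \<alpha> * real (card (X - Y)) + \<beta> * real (card (Y - X)))"

definition tversky_dist :: "real \<Rightarrow> real \<Rightarrow> 'a set \<Rightarrow> 'a set \<Rightarrow> real" where
  "tversky_dist \<alpha> \<beta> X Y =
     (if X \<union> Y = {} then 0 else 1 - tversky_index \<alpha> \<beta> X Y)"

definition is_metric_on :: "'a set \<Rightarrow> ('a \<Rightarrow> 'a \<Rightarrow> real) \<Rightarrow> bool" where
  "is_metric_on S d \<longleftrightarrow>
     (\<forall>x\<in>S. \<forall>y\<in>S. 0 \<le> d x y) \<and>
     (\<forall>x\<in>S. \<forall>y\<in>S. d x y = 0 \<longleftrightarrow> x = y) \<and>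
     (\<forall>x\<in>S. \<forall>y\<in>S. d x y = d y x) \<and>
     (\<forall>x\<in>S. \<forall>y\<in>S. \<forall>z\<in>S. d x z \<le> d x y + d y z)"

end

theory Submission
  imports Defs
begin

text \<open>With equal weights \<alpha> = \<beta> the distance is \<alpha>s / (m + \<alpha>s), where m = |X \<inter> Y| and
  s = |X \<triangle> Y|. Since |X| + |Y| = 2m + s this equals 2\<alpha> \<phi>(s, |X| + |Y|) with
  \<phi>(s, e) = s / ((2\<alpha> - 1)s + e), which is increasing in s and decreasing in e. For \<alpha> \<ge> 1
  the triangle inequality then follows from |X \<triangle> Z| \<le> |X \<triangle> Y| + |Y \<triangle> Z| and
  |Y| \<le> |X| + |X \<triangle> Y|. Conversely, on {0}, {0,1} and {1} symmetry forces
  \<beta>/(1 + \<beta>) = \<alpha>/(1 + \<alpha>), and the triangle inequality through {0,1} forces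
  1 \<le> 2\<beta>/(1 + \<beta>).\<close>

lemma card_sym_diff:
  assumes "finite X" "finite Y"
  shows "card (sym_diff X Y) = card (X - Y) + card (Y - X)"
  using assms by (intro card_Un_disjoint) auto

lemma card_sym_diff_eq_0_iff:
  assumes "finite X" "finite Y"
  shows "card (sym_diff X Y) = 0 \<longleftrightarrow> X = Y"
  using assms by auto

lemma card_sym_diff_triangle:
  assumes "finite X" "finite Y" "finite Z"
  shows "card (sym_diff X Z) \<le> card (sym_diff X Y) + card (sym_diff Y Z)"
proof -
  have "card (sym_diff X Z) \<le> card (sym_diff X Y \<union> sym_diff Y Z)"
    using assms by (intro card_mono) auto
  also have "\<dots> \<le> card (sym_diff X Y) + card (sym_diff Y Z)"
    by (rule card_Un_le)
  finally show ?thesis .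
qed

lemma card_le_card_add_card_sym_diff:
  assumes "finite X" "finite Y"
  shows "card Y \<le> card X + card (sym_diff X Y)"
proof -
  have "card Y \<le> card (X \<union> sym_diff X Y)"
    using assms by (intro card_mono) auto
  also have "\<dots> \<le> card X + card (sym_diff X Y)"
    by (rule card_Un_le)
  finally show ?thesis .
qed

lemma card_add_card_eq_card_Int_sym_diff:
  assumes "finite X" "finite Y"
  shows "card X + card Y = 2 * card (X \<inter> Y) + card (sym_diff X Y)"
  using card_Int_Diff[OF assms(1), of Y] card_Int_Diff[OF assms(2), of X]
    card_sym_diff[OF assms] by (simp add: Int_commute)

lemma tversky_dist_equal_weights:
  fixes \<alpha> :: real
  assumes "finite X" "finite Y" "\<alpha> > 0"
  shows "tversky_dist \<alpha> \<alpha> X Y =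
    \<alpha> * real (card (sym_diff X Y)) / (real (card (X \<inter> Y)) + \<alpha> * real (card (sym_diff X Y)))"
proof (cases "X = Y")
  case True
  with assms show ?thesis
    by (auto simp: tversky_dist_def tversky_index_def card_gt_0_iff)
next
  case False
  define m s where "m = real (card (X \<inter> Y))" and "s = real (card (sym_diff X Y))"
  have "s > 0"
    using False card_sym_diff_eq_0_iff[OF assms(1,2)] by (simp add: s_def)
  then have "m + \<alpha> * s > 0"
    using assms(3) by (simp add: m_def add_nonneg_pos)
  moreover have "tversky_index \<alpha> \<alpha> X Y = m / (m + \<alpha> * s)"
    unfolding tversky_index_def m_def s_def card_sym_diff[OF assms(1,2)]
    by (simp add: algebra_simps)
  ultimately show ?thesis
    using False by (simp add: tversky_dist_def m_def s_def field_simps)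
qed

lemma tversky_dist_equal_weights_card:
  fixes \<alpha> :: real
  assumes "finite X" "finite Y" "\<alpha> > 0"
  shows "tversky_dist \<alpha> \<alpha> X Y = 2 * \<alpha> *
    (real (card (sym_diff X Y)) / ((2 * \<alpha> - 1) * real (card (sym_diff X Y)) + real (card X) + real (card Y)))"
proof -
  have "real (card X) + card Y = 2 * card (X \<inter> Y) + card (sym_diff X Y)"
    using card_add_card_eq_card_Int_sym_diff[OF assms(1,2)] by (simp flip: of_nat_add)
  then have "(2 * \<alpha> - 1) * real (card (sym_diff X Y)) + real (card X) + real (card Y)
      = 2 * (real (card (X \<inter> Y)) + \<alpha> * real (card (sym_diff X Y)))"
    by (simp add: left_diff_distrib distrib_left)
  then show ?thesis
    unfolding tversky_dist_equal_weights[OF assms] by (simp add: mult.assoc del: distrib_left_numeral)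
qed

lemma frac_mono_numerator:
  fixes K e t u :: real
  assumes "K > 0" "e \<ge> 0" "t \<ge> 0" "t \<le> u"
  shows "t / (K * t + e) \<le> u / (K * u + e)"
proof (cases "t = 0")
  case False
  then have "K * t + e > 0" "K * u + e > 0"
    using assms by (auto intro: add_pos_nonneg)
  moreover have "t * e \<le> u * e"
    using assms by (intro mult_right_mono)
  ultimately show ?thesis
    by (simp add: divide_simps algebra_simps)
qed (use assms in simp)

lemma frac_antimono_offset:
  fixes K e e' t :: real
  assumes "K > 0" "t \<ge> 0" "e \<ge> 0" "e \<le> e'"
  shows "t / (K * t + e') \<le> t / (K * t + e)"
proof (cases "t = 0")
  case False
  then have "K * t + e > 0"
    using assms by (auto intro: add_pos_nonneg)
  with assms show ?thesis
    by (intro divide_left_mono) auto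
qed simp

lemma frac_triangle:
  fixes K a b c s\<^sub>1 s\<^sub>2 s\<^sub>3 :: real
  assumes K: "K \<ge> 1"
    and nonneg: "a \<ge> 0" "b \<ge> 0" "c \<ge> 0" "s\<^sub>1 \<ge> 0" "s\<^sub>2 \<ge> 0" "s\<^sub>3 \<ge> 0"
    and s\<^sub>3: "s\<^sub>3 \<le> s\<^sub>1 + s\<^sub>2" and b_le_a: "b \<le> a + s\<^sub>1" and b_le_c: "b \<le> c + s\<^sub>2"
  shows "s\<^sub>3 / (K * s\<^sub>3 + (a + c)) \<le> s\<^sub>1 / (K * s\<^sub>1 + (a + b)) + s\<^sub>2 / (K * s\<^sub>2 + (b + c))"
proof -
  have "s\<^sub>1 \<le> K * s\<^sub>1" "s\<^sub>2 \<le> K * s\<^sub>2"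
    using K nonneg mult_right_mono[of 1 K] by auto
  have "s\<^sub>3 / (K * s\<^sub>3 + (a + c)) \<le> (s\<^sub>1 + s\<^sub>2) / (K * (s\<^sub>1 + s\<^sub>2) + (a + c))"
    using K nonneg s\<^sub>3 by (intro frac_mono_numerator) auto
  also have "\<dots> = s\<^sub>1 / (K * s\<^sub>1 + (K * s\<^sub>2 + a + c)) + s\<^sub>2 / (K * s\<^sub>2 + (K * s\<^sub>1 + a + c))"
    by (simp add: add_divide_distrib algebra_simps)
  also have "\<dots> \<le> s\<^sub>1 / (K * s\<^sub>1 + (a + b)) + s\<^sub>2 / (K * s\<^sub>2 + (b + c))"
  proof (rule add_mono[OF frac_antimono_offset frac_antimono_offset])
    show "a + b \<le> K * s\<^sub>2 + a + c" "b + c \<le> K * s\<^sub>1 + a + c"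
      using b_le_a b_le_c \<open>s\<^sub>1 \<le> K * s\<^sub>1\<close> \<open>s\<^sub>2 \<le> K * s\<^sub>2\<close> by linarith+
  qed (use K nonneg in auto)
  finally show ?thesis .
qed

lemma tversky_dist_nonneg:
  fixes \<alpha> :: real
  assumes "finite X" "finite Y" "\<alpha> > 0"
  shows "tversky_dist \<alpha> \<alpha> X Y \<ge> 0"
  unfolding tversky_dist_equal_weights[OF assms] using assms(3) by simp

lemma tversky_dist_eq_0_iff:
  fixes \<alpha> :: real
  assumes "finite X" "finite Y" "\<alpha> > 0"
  shows "tversky_dist \<alpha> \<alpha> X Y = 0 \<longleftrightarrow> X = Y"
proof -
  have "tversky_dist \<alpha> \<alpha> X Y = 0 \<longleftrightarrow> card (sym_diff X Y) = 0"
    unfolding tversky_dist_equal_weights[OF assms] using assms(3)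
    by (auto simp: add_nonneg_eq_0_iff)
  with card_sym_diff_eq_0_iff[OF assms(1,2)] show ?thesis
    by simp
qed

lemma tversky_dist_commute: "tversky_dist \<alpha> \<alpha> X Y = tversky_dist \<alpha> \<alpha> Y X"
  by (simp add: tversky_dist_def tversky_index_def Int_commute Un_commute algebra_simps)

lemma tversky_dist_triangle:
  fixes \<alpha> :: real
  assumes "finite X" "finite Y" "finite Z" "\<alpha> \<ge> 1"
  shows "tversky_dist \<alpha> \<alpha> X Z \<le> tversky_dist \<alpha> \<alpha> X Y + tversky_dist \<alpha> \<alpha> Y Z"
proof -
  define s where "s A B = real (card (sym_diff A B))" for A B :: "'a set"
  define n where "n A = real (card A)" for A :: "'a set"
  define K where "K = 2 * \<alpha> - 1"
  have "s X Z / (K * s X Z + (n X + n Z))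
      \<le> s X Y / (K * s X Y + (n X + n Y)) + s Y Z / (K * s Y Z + (n Y + n Z))"
  proof (rule frac_triangle)
    show "s X Z \<le> s X Y + s Y Z"
      using card_sym_diff_triangle[OF assms(1-3)] by (simp add: s_def)
    show "n Y \<le> n X + s X Y" "n Y \<le> n Z + s Y Z"
      using card_le_card_add_card_sym_diff[OF assms(1,2)]
        card_le_card_add_card_sym_diff[OF assms(3,2)]
      by (simp_all add: n_def s_def Un_commute)
  qed (use assms in \<open>auto simp: K_def s_def n_def\<close>)
  then have "2 * \<alpha> * (s X Z / (K * s X Z + (n X + n Z)))
      \<le> 2 * \<alpha> * (s X Y / (K * s X Y + (n X + n Y)) + s Y Z / (K * s Y Z + (n Y + n Z)))"
    using assms(4) by (intro mult_left_mono) auto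
  with assms show ?thesis
    by (simp add: tversky_dist_equal_weights_card s_def n_def K_def distrib_left add.assoc)
qed

lemma is_metric_on_tversky_dist:
  fixes \<alpha> :: real
  assumes "\<alpha> \<ge> 1"
  shows "is_metric_on {X. finite X} (tversky_dist \<alpha> \<alpha>)"
  unfolding is_metric_on_def
proof (intro conjI ballI)
  fix X Y Z :: "'a set"
  assume "X \<in> {X. finite X}" "Y \<in> {X. finite X}" "Z \<in> {X. finite X}"
  then have "finite X" "finite Y" "finite Z"
    by simp_all
  with assms show "0 \<le> tversky_dist \<alpha> \<alpha> X Y"
    and "tversky_dist \<alpha> \<alpha> X Y = 0 \<longleftrightarrow> X = Y"
    and "tversky_dist \<alpha> \<alpha> X Y = tversky_dist \<alpha> \<alpha> Y X"
    and "tversky_dist \<alpha> \<alpha> X Z \<le> tversky_dist \<alpha> \<alpha> X Y + tversky_dist \<alpha> \<alpha> Y Z"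
    by (simp_all add: tversky_dist_nonneg tversky_dist_eq_0_iff tversky_dist_commute
        tversky_dist_triangle)
qed

lemma tversky_dist_disjoint:
  assumes "X \<inter> Y = {}" "X \<union> Y \<noteq> {}"
  shows "tversky_dist \<alpha> \<beta> X Y = 1"
  using assms by (simp add: tversky_dist_def tversky_index_def)

lemma tversky_dist_singleton_pair:
  assumes "a \<noteq> b" "\<beta> > 0"
  shows "tversky_dist \<alpha> \<beta> {a} {a, b} = \<beta> / (1 + \<beta>)"
  using assms by (simp add: tversky_dist_def tversky_index_def insert_Diff_if field_simps)

lemma tversky_dist_pair_singleton:
  assumes "a \<noteq> b" "\<alpha> > 0"
  shows "tversky_dist \<alpha> \<beta> {a, b} {b} = \<alpha> / (1 + \<alpha>)"
  using assms by (simp add: tversky_dist_def tversky_index_def insert_Diff_if field_simps)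

lemma tversky_dist_metric_imp_weights:
  fixes \<alpha> \<beta> :: real and a b :: 'a
  assumes metric: "is_metric_on {X :: 'a set. finite X} (tversky_dist \<alpha> \<beta>)"
    and "a \<noteq> b" "\<alpha> > 0" "\<beta> > 0"
  shows "\<alpha> = \<beta> \<and> \<beta> \<ge> 1"
proof -
  let ?d = "tversky_dist \<alpha> \<beta>"
  have sym: "?d X Y = ?d Y X" if "finite X" "finite Y" for X Y :: "'a set"
    using metric that unfolding is_metric_on_def by blast
  have tri: "?d X Z \<le> ?d X Y + ?d Y Z" if "finite X" "finite Y" "finite Z" for X Y Z :: "'a set"
    using metric that unfolding is_metric_on_def by blast
  have "?d {a} {a, b} = ?d {b, a} {a}"
    using sym[of "{a}" "{a, b}"] by (simp add: insert_commute)
  then have "\<beta> / (1 + \<beta>) = \<alpha> / (1 + \<alpha>)"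
    using assms by (simp add: tversky_dist_singleton_pair tversky_dist_pair_singleton)
  then have "\<alpha> = \<beta>"
    using assms by (simp add: frac_eq_eq algebra_simps)
  have "?d {a} {b} \<le> ?d {a} {a, b} + ?d {a, b} {b}"
    by (rule tri) simp_all
  then have "1 \<le> 2 * \<beta> / (1 + \<beta>)"
    using assms \<open>\<alpha> = \<beta>\<close>
    by (simp add: tversky_dist_disjoint tversky_dist_singleton_pair tversky_dist_pair_singleton)
  with \<open>\<alpha> = \<beta>\<close> \<open>\<beta> > 0\<close> show ?thesis
    by (simp add: le_divide_eq)
qed

theorem mainTheorem2:
  fixes \<alpha> \<beta> :: real
  assumes "\<alpha> > 0" and "\<beta> > 0"
  shows "is_metric_on {X :: nat set. finite X} (tversky_dist \<alpha> \<beta>) \<longleftrightarrow> (\<alpha> = \<beta> \<and> \<beta> \<ge> 1)"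
proof
  assume "is_metric_on {X :: nat set. finite X} (tversky_dist \<alpha> \<beta>)"
  with assms show "\<alpha> = \<beta> \<and> \<beta> \<ge> 1"
    by (intro tversky_dist_metric_imp_weights[of \<alpha> \<beta> "0 :: nat" 1]) simp_all
next
  assume "\<alpha> = \<beta> \<and> \<beta> \<ge> 1"
  then show "is_metric_on {X :: nat set. finite X} (tversky_dist \<alpha> \<beta>)"
    using is_metric_on_tversky_dist[of \<beta>] by simp
qed

end
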